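(* Let $A(x)$ and $B(x)\neq 0$ be rational functions with real coefficients. Suppose all solutions of the ordinary differential equation $$f(x)A(x)+f'(x)B(x)=1$$ are algebraic functions. Then the general solution of this equation can be written as $$f(x)=r(x)+\sigma q^{1/N}(x),\qquad \sigma\in\mathbb{R},$$ where $N\in\mathbb{N}$ and $r(x),q(x)$ are rational functions (independent of $\sigma$). *)

theory Defs
  imports "HOL-Analysis.Analysis" "HOL-Computational_Algebra.Polynomial"
begin

definition rat_eval :: "real poly \<Rightarrow> real poly \<Rightarrow> real \<Rightarrow> real" where
  "rat_eval p q x = poly p x / poly q x"

text \<open>Bivariate real polynomial P(x,y): a polynomial in y whose coefficients are polynomials in x.\<close>
definition eval2 :: "real poly poly \<Rightarrow> real \<Rightarrow> real \<Rightarrow> real" where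
  "eval2 P x y = poly (map_poly (\<lambda>c. poly c x) P) y"

definition algebraic_on :: "real set \<Rightarrow> (real \<Rightarrow> real) \<Rightarrow> bool" where
  "algebraic_on I f \<longleftrightarrow> (\<exists>P :: real poly poly. P \<noteq> 0 \<and> (\<forall>x\<in>I. eval2 P x (f x) = 0))"

text \<open>Open interval ]a,b[ on which A = pA/qA and B = pB/qB are defined and B does not vanish.\<close>
definition admissible :: "real poly \<Rightarrow> real poly \<Rightarrow> real poly \<Rightarrow> real \<Rightarrow> real \<Rightarrow> bool" where
  "admissible qA pB qB a b \<longleftrightarrow> a < b \<and>
     (\<forall>x\<in>{a<..<b}. poly qA x \<noteq> 0 \<and> poly pB x \<noteq> 0 \<and> poly qB x \<noteq> 0)"

definition ode_solution ::
  "real poly \<Rightarrow> real poly \<Rightarrow> real poly \<Rightarrow> real poly \<Rightarrow> real set \<Rightarrow> (real \<Rightarrow> real) \<Rightarrow> bool" where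
  "ode_solution pA qA pB qB I f \<longleftrightarrow>
     (\<forall>x\<in>I. \<exists>d. (f has_real_derivative d) (at x) \<and>
        f x * rat_eval pA qA x + d * rat_eval pB qB x = 1)"

end

(* Clearing denominators, the equation reads D f' = B + C f with polynomials D, B, C.  Let f be a
   solution on an interval where D does not vanish and let P(x, y) = \<Sum> a\<^sub>k(x) y^k be a
   nonzero polynomial of least y-degree m with P(x, f x) = 0.  Differentiating along the solution
   gives D \<partial>\<^sub>xP + (B + C y) \<partial>\<^sub>yP, which has y-degree at most m and also annihilates f;
   by minimality it is a multiple of P.  Comparing coefficients of y^(m-1) shows that the rational
   function -a\<^sub>m\<^sub>-\<^sub>1 / (m a\<^sub>m) is a solution r.  If h is a positive solution of the
   homogeneous equation, r + h is a solution, so h is algebraic too, and comparing coefficients of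
   y^0 for its minimal polynomial shows that w = a\<^sub>0 / a\<^sub>m satisfies D w' = m C w; hence the m-th
   root of w solves the homogeneous equation and every solution is r + \<sigma> w^(1/m).  In lowest
   terms, the denominators (and the numerator of w) cannot vanish where D does not. *)

theory Submission
  imports Defs
begin

lemma eval2_add [simp]: "eval2 (P + Q) x y = eval2 P x y + eval2 Q x y"
proof -
  have "map_poly (\<lambda>c. poly c x) (P + Q) = map_poly (\<lambda>c. poly c x) P + map_poly (\<lambda>c. poly c x) Q"
    by (intro poly_eqI) (simp add: coeff_map_poly)
  then show ?thesis
    by (simp add: eval2_def)
qed

lemma eval2_diff [simp]: "eval2 (P - Q) x y = eval2 P x y - eval2 Q x y"
  using eval2_add[of "P - Q" Q x y] by simp

lemma eval2_pCons [simp]: "eval2 (pCons a P) x y = poly a x + y * eval2 P x y"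
  by (simp add: eval2_def map_poly_pCons)

lemma eval2_0 [simp]: "eval2 0 x y = 0"
  by (simp add: eval2_def)

lemma eval2_smult [simp]: "eval2 (smult a P) x y = poly a x * eval2 P x y"
  by (simp add: eval2_def map_poly_smult)

lemma eval2_mult [simp]: "eval2 (P * Q) x y = eval2 P x y * eval2 Q x y"
  by (induction P) (simp_all add: algebra_simps)

lemma eval2_monom [simp]: "eval2 (monom a k) x y = poly a x * y ^ k"
  by (simp add: eval2_def map_poly_monom poly_monom)

lemma eval2_sum [simp]: "eval2 (\<Sum>k\<in>S. F k) x y = (\<Sum>k\<in>S. eval2 (F k) x y)"
  by (induction S rule: infinite_finite_induct) simp_all

lemma eval2_pcompose: "eval2 (pcompose P R) x y = eval2 P x (eval2 R x y)"
  by (induction P) (simp_all add: pcompose_pCons)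

lemma eval2_eq_sum:
  assumes "degree P \<le> n"
  shows "eval2 P x y = (\<Sum>k\<le>n. poly (coeff P k) x * y ^ k)"
proof -
  have "P = (\<Sum>k\<le>n. monom (coeff P k) k)"
    using assms by (simp add: poly_as_sum_of_monoms')
  then show ?thesis
    by (metis (no_types, lifting) eval2_monom eval2_sum sum.cong)
qed

lemma eval2_has_real_derivative:
  assumes "(f has_real_derivative d) (at x)"
  shows "((\<lambda>t. eval2 P t (f t)) has_real_derivative
           eval2 (map_poly pderiv P) x (f x) + d * eval2 (pderiv P) x (f x)) (at x)"
proof (induction P)
  case (pCons a P)
  have "((\<lambda>t. poly a t + f t * eval2 P t (f t)) has_real_derivative
          poly (pderiv a) x + (f x * (eval2 (map_poly pderiv P) x (f x) + d * eval2 (pderiv P) x (f x))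
            + d * eval2 P x (f x))) (at x)"
    by (intro DERIV_add DERIV_mult' poly_DERIV assms pCons.IH)
  then show ?case
    by (simp add: map_poly_pCons pderiv_pCons algebra_simps)
qed simp

definition linear_ode_on :: "real set \<Rightarrow> real poly \<Rightarrow> real poly \<Rightarrow> real poly \<Rightarrow> (real \<Rightarrow> real) \<Rightarrow> bool" where
  "linear_ode_on I D B C f \<longleftrightarrow>
     (\<forall>x\<in>I. \<exists>d. (f has_real_derivative d) (at x) \<and> poly D x * d = poly B x + poly C x * f x)"

text \<open>\<open>D \<partial>\<^sub>xP + (B + C y) \<partial>\<^sub>yP\<close>: evaluated at \<open>y = f x\<close>, this is \<open>D\<close> times the derivative of
  \<open>t \<mapsto> P(t, f t)\<close> for a solution \<open>f\<close> of \<open>D f' = B + C f\<close>.\<close>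
definition lie_derivative :: "real poly \<Rightarrow> real poly \<Rightarrow> real poly \<Rightarrow> real poly poly \<Rightarrow> real poly poly" where
  "lie_derivative D B C P = smult D (map_poly pderiv P) + [:B, C:] * pderiv P"

lemma coeff_lie_derivative:
  "coeff (lie_derivative D B C P) k =
     D * pderiv (coeff P k) + of_nat (Suc k) * B * coeff P (Suc k) + of_nat k * C * coeff P k"
  by (cases k) (simp_all add: lie_derivative_def coeff_map_poly coeff_pderiv algebra_simps)

lemma degree_lie_derivative_le: "degree (lie_derivative D B C P) \<le> degree P"
  by (intro degree_le) (simp add: coeff_lie_derivative coeff_eq_0)

lemma lie_derivative_vanishes:
  assumes "open I" and "linear_ode_on I D B C f" and "\<forall>x\<in>I. eval2 P x (f x) = 0"
  shows "\<forall>x\<in>I. eval2 (lie_derivative D B C P) x (f x) = 0"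
proof
  fix x assume x: "x \<in> I"
  obtain d where d: "(f has_real_derivative d) (at x)" and ode: "poly D x * d = poly B x + poly C x * f x"
    using assms(2) x unfolding linear_ode_on_def by blast
  have "((\<lambda>t. eval2 P t (f t)) has_real_derivative 0) (at x)"
    by (rule has_field_derivative_transform_within_open[of "\<lambda>_. 0" 0 x I]) (use assms x in auto)
  then have deriv_0: "eval2 (map_poly pderiv P) x (f x) + d * eval2 (pderiv P) x (f x) = 0"
    using DERIV_unique eval2_has_real_derivative[OF d] by blast
  have "eval2 (lie_derivative D B C P) x (f x) =
      poly D x * eval2 (map_poly pderiv P) x (f x) + (poly B x + poly C x * f x) * eval2 (pderiv P) x (f x)"
    by (simp add: lie_derivative_def algebra_simps)
  also have "\<dots> = poly D x * (eval2 (map_poly pderiv P) x (f x) + d * eval2 (pderiv P) x (f x))"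
    unfolding ode [symmetric] by (simp add: algebra_simps)
  finally show "eval2 (lie_derivative D B C P) x (f x) = 0"
    by (simp add: deriv_0)
qed

definition annihilator_on :: "real set \<Rightarrow> (real \<Rightarrow> real) \<Rightarrow> real poly poly \<Rightarrow> bool" where
  "annihilator_on I f P \<longleftrightarrow> P \<noteq> 0 \<and> (\<forall>x\<in>I. eval2 P x (f x) = 0)"

definition minimal_annihilator_on :: "real set \<Rightarrow> (real \<Rightarrow> real) \<Rightarrow> real poly poly \<Rightarrow> bool" where
  "minimal_annihilator_on I f P \<longleftrightarrow>
     annihilator_on I f P \<and> (\<forall>Q. annihilator_on I f Q \<longrightarrow> degree P \<le> degree Q)"

lemma algebraic_on_iff_annihilator: "algebraic_on I f \<longleftrightarrow> (\<exists>P. annihilator_on I f P)"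
  by (simp add: algebraic_on_def annihilator_on_def)

lemma minimal_annihilator_exists:
  assumes "algebraic_on I f"
  obtains P where "minimal_annihilator_on I f P"
  using assms ex_has_least_nat[of "annihilator_on I f" _ degree]
  unfolding algebraic_on_iff_annihilator minimal_annihilator_on_def by blast

lemma annihilator_degree_pos:
  assumes "infinite I" and "annihilator_on I f P"
  shows "degree P > 0"
proof (rule ccontr)
  assume "\<not> degree P > 0"
  then obtain a where P: "P = [:a:]"
    by (metis degree_eq_zeroE neq0_conv)
  then have "I \<subseteq> {x. poly a x = 0}"
    using assms(2) by (auto simp: annihilator_on_def)
  then have "a = 0"
    using assms(1) poly_roots_finite finite_subset by blast
  then show False
    using assms(2) P by (simp add: annihilator_on_def)
qed

lemma minimal_annihilator_lie_identity:
  assumes "open I" and "linear_ode_on I D B C f" and "minimal_annihilator_on I f P"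
  shows "smult (lead_coeff P) (lie_derivative D B C P) =
           smult (coeff (lie_derivative D B C P) (degree P)) P"
proof -
  define L where "L = lie_derivative D B C P"
  define R where "R = smult (lead_coeff P) L - smult (coeff L (degree P)) P"
  have P: "annihilator_on I f P" and P_min: "\<And>Q. annihilator_on I f Q \<Longrightarrow> degree P \<le> degree Q"
    using assms(3) by (auto simp: minimal_annihilator_on_def)
  have "\<forall>x\<in>I. eval2 L x (f x) = 0"
    unfolding L_def using lie_derivative_vanishes assms(1,2) P by (auto simp: annihilator_on_def)
  then have R_vanishes: "\<forall>x\<in>I. eval2 R x (f x) = 0"
    using P by (simp add: R_def annihilator_on_def)
  have "degree R \<le> degree P"
    unfolding R_def L_def
    by (intro degree_diff_le order.trans[OF degree_smult_le] degree_lie_derivative_le) simp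
  moreover have "coeff R (degree P) = 0"
    by (simp add: R_def)
  ultimately have "R \<noteq> 0 \<Longrightarrow> degree R < degree P"
    by (metis le_neq_implies_less leading_coeff_0_iff)
  then have "R = 0"
    using P_min R_vanishes by (force simp: annihilator_on_def)
  then show ?thesis
    by (simp add: R_def L_def)
qed

lemma minimal_annihilator_coeff_0:
  assumes "\<forall>x\<in>I. f x \<noteq> 0" and "minimal_annihilator_on I f P"
  shows "coeff P 0 \<noteq> 0"
proof
  assume "coeff P 0 = 0"
  then obtain Q where P: "P = [:0, 1:] * Q"
    by (metis dvdE minus_zero poly_0_coeff_0 poly_eq_0_iff_dvd)
  have P_ann: "annihilator_on I f P" and P_min: "\<And>Q. annihilator_on I f Q \<Longrightarrow> degree P \<le> degree Q"
    using assms(2) by (auto simp: minimal_annihilator_on_def)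
  then have "Q \<noteq> 0"
    by (auto simp: annihilator_on_def P)
  then have "degree P = Suc (degree Q)"
    by (simp add: P degree_mult_eq)
  moreover have "annihilator_on I f Q"
    using P_ann assms(1) \<open>Q \<noteq> 0\<close> by (simp add: annihilator_on_def P)
  ultimately show False
    using P_min by fastforce
qed

lemma algebraic_solution_rational_identity:
  assumes "open I" and "infinite I" and "linear_ode_on I D B C f" and "algebraic_on I f"
  obtains u v where "v \<noteq> 0" and "D * (pderiv u * v - u * pderiv v) = C * u * v + B * v\<^sup>2"
proof -
  obtain P where P: "minimal_annihilator_on I f P"
    using assms(4) minimal_annihilator_exists by blast
  then have "degree P > 0"
    using annihilator_degree_pos assms(2) by (auto simp: minimal_annihilator_on_def)
  then obtain k where k: "degree P = Suc k"
    using gr0_conv_Suc by blast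
  define a where "a = coeff P k"
  define a' where "a' = coeff P (Suc k)"
  have "a' \<noteq> 0"
    using P k by (metis a'_def annihilator_on_def leading_coeff_0_iff minimal_annihilator_on_def)
  have "coeff (smult (lead_coeff P) (lie_derivative D B C P)) k =
        coeff (smult (coeff (lie_derivative D B C P) (degree P)) P) k"
    by (simp only: minimal_annihilator_lie_identity[OF assms(1,3) P])
  then have identity: "a' * (D * pderiv a + of_nat (Suc k) * B * a' + of_nat k * C * a) =
      (D * pderiv a' + of_nat (Suc k) * C * a') * a"
    by (simp add: coeff_lie_derivative k a_def a'_def coeff_eq_0)
  show thesis
  proof (rule that[of "of_nat (Suc k) * a'" "- a"])
    show "of_nat (Suc k) * a' \<noteq> 0"
      using \<open>a' \<noteq> 0\<close> by (simp add: of_nat_poly)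
    have "pderiv ((1 + of_nat k) * a') = (1 + of_nat k) * pderiv a'"
      by (simp add: pderiv_mult pderiv_add)
    then show "D * (pderiv (- a) * (of_nat (Suc k) * a') - - a * pderiv (of_nat (Suc k) * a')) =
        C * - a * (of_nat (Suc k) * a') + B * (of_nat (Suc k) * a')\<^sup>2"
      using identity unfolding of_nat_Suc pderiv_minus by algebra
  qed
qed

lemma algebraic_solution_radical_identity:
  assumes "open I" and "infinite I" and "linear_ode_on I D 0 C h" and "\<forall>x\<in>I. h x \<noteq> 0"
    and "algebraic_on I h"
  obtains m u v where "m > 0" and "u \<noteq> 0" and "v \<noteq> 0"
    and "D * (pderiv u * v - u * pderiv v) = of_nat m * C * u * v"
proof -
  obtain P where P: "minimal_annihilator_on I h P"
    using assms(5) minimal_annihilator_exists by blast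
  define m where "m = degree P"
  have "m > 0"
    using annihilator_degree_pos assms(2) P by (auto simp: m_def minimal_annihilator_on_def)
  have "lead_coeff P \<noteq> 0"
    using P by (auto simp: minimal_annihilator_on_def annihilator_on_def)
  have "coeff P 0 \<noteq> 0"
    using minimal_annihilator_coeff_0 assms(4) P .
  have "coeff (smult (lead_coeff P) (lie_derivative D 0 C P)) 0 =
        coeff (smult (coeff (lie_derivative D 0 C P) (degree P)) P) 0"
    by (simp only: minimal_annihilator_lie_identity[OF assms(1,3) P])
  then have "lead_coeff P * (D * pderiv (coeff P 0)) =
      (D * pderiv (lead_coeff P) + of_nat m * C * lead_coeff P) * coeff P 0"
    by (simp add: coeff_lie_derivative m_def)
  then have "D * (pderiv (coeff P 0) * lead_coeff P - coeff P 0 * pderiv (lead_coeff P)) =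
      of_nat m * C * coeff P 0 * lead_coeff P"
    by (simp add: algebra_simps)
  with \<open>m > 0\<close> \<open>coeff P 0 \<noteq> 0\<close> \<open>lead_coeff P \<noteq> 0\<close> show thesis
    using that by blast
qed

lemma poly_nonzero_if_dvd_pderiv:
  fixes s E :: "'a::{idom,semiring_char_0} poly"
  assumes "s \<noteq> 0" and "s dvd E * pderiv s" and "poly E x \<noteq> 0"
  shows "poly s x \<noteq> 0"
proof
  assume "poly s x = 0"
  then have order_s: "order x s = Suc (order x (pderiv s))"
    using order_pderiv[OF assms(1)] by blast
  then have "pderiv s \<noteq> 0"
    using order_degree[OF assms(1), of x] by (auto simp: pderiv_eq_0_iff)
  have "E \<noteq> 0" and "order x E = 0"
    using assms(3) order_root by auto
  have "order x s \<le> order x (E * pderiv s)"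
    using dvd_imp_order_le[OF _ assms(2)] \<open>E \<noteq> 0\<close> \<open>pderiv s \<noteq> 0\<close> by simp
  also have "\<dots> = order x (pderiv s)"
    using order_mult[of E "pderiv s" x] \<open>E \<noteq> 0\<close> \<open>pderiv s \<noteq> 0\<close> \<open>order x E = 0\<close> by simp
  finally show False
    using order_s by simp
qed

lemma coprime_quotient_exists:
  fixes u v :: "'a::field poly"
  assumes "v \<noteq> 0"
  obtains s t where "coprime s t" and "t \<noteq> 0" and "s * v = t * u"
proof -
  define R where "R = (\<lambda>(s, t). t \<noteq> 0 \<and> s * v = t * u)"
  have "R (u, v)"
    using assms by (simp add: R_def mult.commute)
  then obtain s t where st: "R (s, t)" and min: "\<And>s' t'. R (s', t') \<Longrightarrow> degree t \<le> degree t'"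
    using ex_has_least_nat[of R "(u, v)" "\<lambda>p. degree (snd p)"] by fastforce
  have "coprime s t"
  proof (rule coprimeI)
    fix c assume "c dvd s" "c dvd t"
    then obtain s' t' where s: "s = c * s'" and t: "t = c * t'"
      by (elim dvdE)
    have "c \<noteq> 0" "t' \<noteq> 0"
      using st t by (auto simp: R_def)
    then have "R (s', t')"
      using st by (simp add: R_def s t mult.assoc)
    then have "degree t \<le> degree t'"
      by (rule min)
    then have "degree c = 0"
      using \<open>c \<noteq> 0\<close> \<open>t' \<noteq> 0\<close> by (simp add: t degree_mult_eq)
    then show "is_unit c"
      using \<open>c \<noteq> 0\<close> by (simp add: is_unit_iff_degree)
  qed
  then show thesis
    using that st by (simp add: R_def)
qed

lemma coprime_poly_no_common_root:
  fixes p q :: "'a::field poly"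
  assumes "coprime p q"
  shows "poly p x \<noteq> 0 \<or> poly q x \<noteq> 0"
proof (rule ccontr)
  assume "\<not> (poly p x \<noteq> 0 \<or> poly q x \<noteq> 0)"
  then have "is_unit [:-x, 1:]"
    using assms coprime_common_divisor by (auto simp: poly_eq_0_iff_dvd)
  then show False
    by (simp add: is_unit_iff_degree)
qed

lemma rational_solution_coprime:
  fixes u v :: "real poly"
  assumes "v \<noteq> 0" and "D * (pderiv u * v - u * pderiv v) = C * u * v + B * v\<^sup>2"
  obtains s t where "coprime s t" and "t \<noteq> 0" and "u \<noteq> 0 \<Longrightarrow> s \<noteq> 0"
    and "D * (pderiv s * t - s * pderiv t) = C * s * t + B * t\<^sup>2"
proof -
  obtain s t where st: "coprime s t" "t \<noteq> 0" "s * v = t * u"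
    using coprime_quotient_exists assms(1) by blast
  have "pderiv s * v + s * pderiv v = pderiv t * u + t * pderiv u"
    using arg_cong[OF st(3), of pderiv] by (simp add: pderiv_mult algebra_simps)
  then have "v\<^sup>2 * (D * (pderiv s * t - s * pderiv t)) = v\<^sup>2 * (C * s * t + B * t\<^sup>2)"
    using st(3) assms(2) by algebra
  then have "D * (pderiv s * t - s * pderiv t) = C * s * t + B * t\<^sup>2"
    using assms(1) by simp
  moreover have "u \<noteq> 0 \<Longrightarrow> s \<noteq> 0"
    using st(2,3) assms(1) by auto
  ultimately show thesis
    using that st(1,2) by blast
qed

lemma rational_solution_denominator_nonzero:
  fixes s t :: "real poly"
  assumes "coprime s t" and "t \<noteq> 0" and "D * (pderiv s * t - s * pderiv t) = C * s * t + B * t\<^sup>2"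
    and "poly D x \<noteq> 0"
  shows "poly t x \<noteq> 0"
proof
  assume "poly t x = 0"
  then have "poly (D * s) x \<noteq> 0"
    using assms(1,4) coprime_poly_no_common_root by fastforce
  moreover have "t dvd (D * s) * pderiv t"
  proof
    show "D * s * pderiv t = t * (D * pderiv s - C * s - B * t)"
      using assms(3) by (simp add: algebra_simps power2_eq_square)
  qed
  ultimately show False
    using poly_nonzero_if_dvd_pderiv assms(2) \<open>poly t x = 0\<close> by blast
qed

lemma rational_solution_numerator_nonzero:
  fixes s t :: "real poly"
  assumes "coprime s t" and "s \<noteq> 0" and "D * (pderiv s * t - s * pderiv t) = C * s * t"
    and "poly D x \<noteq> 0"
  shows "poly s x \<noteq> 0"
proof
  assume "poly s x = 0"
  then have "poly (D * t) x \<noteq> 0"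
    using assms(1,4) coprime_poly_no_common_root by fastforce
  moreover have "s dvd (D * t) * pderiv s"
  proof
    show "D * t * pderiv s = s * (D * pderiv t + C * t)"
      using assms(3) by (simp add: algebra_simps)
  qed
  ultimately show False
    using poly_nonzero_if_dvd_pderiv assms(2) \<open>poly s x = 0\<close> by blast
qed

lemma linear_ode_on_rational:
  fixes s t :: "real poly"
  assumes "D * (pderiv s * t - s * pderiv t) = C * s * t + B * t\<^sup>2"
    and "\<forall>x\<in>I. poly D x \<noteq> 0 \<and> poly t x \<noteq> 0"
  shows "linear_ode_on I D B C (rat_eval s t)"
  unfolding linear_ode_on_def
proof
  fix x assume "x \<in> I"
  then have t: "poly t x \<noteq> 0"
    using assms(2) by auto
  define d where "d = (poly (pderiv s) x * poly t x - poly s x * poly (pderiv t) x) / (poly t x * poly t x)"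
  have "(rat_eval s t has_real_derivative d) (at x)"
    unfolding d_def rat_eval_def[abs_def] by (rule DERIV_divide[OF poly_DERIV poly_DERIV t])
  moreover have "poly D x * d = poly B x + poly C x * rat_eval s t x"
  proof -
    have "poly D x * d = poly (D * (pderiv s * t - s * pderiv t)) x / (poly t x * poly t x)"
      by (simp add: d_def)
    also have "\<dots> = poly (C * s * t + B * t\<^sup>2) x / (poly t x * poly t x)"
      by (simp only: assms(1))
    also have "\<dots> = poly B x + poly C x * rat_eval s t x"
      using t by (simp add: rat_eval_def power2_eq_square field_simps)
    finally show ?thesis .
  qed
  ultimately show "\<exists>d. (rat_eval s t has_real_derivative d) (at x) \<and>
      poly D x * d = poly B x + poly C x * rat_eval s t x"
    by blast
qed

lemma has_real_derivative_root:
  assumes "n > 0" and "z \<noteq> 0"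
  shows "(root n has_real_derivative root n z / (of_nat n * z)) (at z)"
proof -
  have "root n z \<noteq> 0"
    using assms by simp
  have pow: "root n z ^ n = root n z ^ (n - 1) * root n z"
    using assms(1) by (metis Suc_pred power_Suc2 One_nat_def)
  show ?thesis
  proof (rule DERIV_real_root_generic[OF assms])
    assume "even n" "0 < z"
    then have "root n z ^ n = z"
      using assms(1) by simp
    then show "root n z / (of_nat n * z) = inverse (real n * root n z ^ (n - Suc 0))"
      using \<open>root n z \<noteq> 0\<close> assms pow by (simp add: field_simps)
  next
    assume "even n" "z < 0"
    then have "root n z ^ n = root n (- z) ^ n"
      by (simp add: real_root_minus)
    also have "\<dots> = - z"
      using \<open>z < 0\<close> assms(1) by simp
    finally have "root n z ^ n = - z" .
    then show "root n z / (of_nat n * z) = - inverse (real n * root n z ^ (n - Suc 0))"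
      using \<open>root n z \<noteq> 0\<close> assms pow by (simp add: field_simps)
  next
    assume "odd n"
    then have "root n z ^ n = z"
      by (rule odd_real_root_pow)
    then show "root n z / (of_nat n * z) = inverse (real n * root n z ^ (n - Suc 0))"
      using \<open>root n z \<noteq> 0\<close> assms pow by (simp add: field_simps)
  qed
qed

lemma linear_ode_on_root:
  fixes s t :: "real poly"
  assumes "D * (pderiv s * t - s * pderiv t) = of_nat n * C * s * t" and "n > 0"
    and "\<forall>x\<in>I. poly D x \<noteq> 0 \<and> poly s x \<noteq> 0 \<and> poly t x \<noteq> 0"
  shows "linear_ode_on I D 0 C (\<lambda>x. root n (rat_eval s t x))"
proof -
  have quotient: "linear_ode_on I D 0 (of_nat n * C) (rat_eval s t)"
    using linear_ode_on_rational[of D s t "of_nat n * C" 0] assms(1,3) by simp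
  show ?thesis
    unfolding linear_ode_on_def
  proof
    fix x assume x: "x \<in> I"
    define z where "z = rat_eval s t x"
    have "z \<noteq> 0"
      using assms(3) x by (simp add: z_def rat_eval_def)
    obtain d where d: "(rat_eval s t has_real_derivative d) (at x)"
      and ode: "poly D x * d = of_nat n * poly C x * z"
      using quotient x
      by (auto simp: linear_ode_on_def z_def of_nat_poly)
    have "(root n has_real_derivative root n z / (of_nat n * z)) (at (rat_eval s t x))"
      using has_real_derivative_root[OF assms(2) \<open>z \<noteq> 0\<close>] by (simp add: z_def)
    from DERIV_chain2[OF this d]
    have "((\<lambda>x. root n (rat_eval s t x)) has_real_derivative root n z / (of_nat n * z) * d) (at x)" .
    moreover have "poly D x * (root n z / (of_nat n * z) * d) = poly 0 x + poly C x * root n z"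
      using ode \<open>z \<noteq> 0\<close> assms(2) by (simp add: field_simps)
    ultimately show "\<exists>d. ((\<lambda>x. root n (rat_eval s t x)) has_real_derivative d) (at x) \<and>
        poly D x * d = poly 0 x + poly C x * root n (rat_eval s t x)"
      by (auto simp: z_def)
  qed
qed

lemma linear_ode_on_add:
  assumes "linear_ode_on I D B C f" and "linear_ode_on I D B' C g"
  shows "linear_ode_on I D (B + B') C (\<lambda>x. f x + g x)"
  unfolding linear_ode_on_def
proof
  fix x assume "x \<in> I"
  then obtain d e where "(f has_real_derivative d) (at x)" "poly D x * d = poly B x + poly C x * f x"
    and "(g has_real_derivative e) (at x)" "poly D x * e = poly B' x + poly C x * g x"
    using assms unfolding linear_ode_on_def by blast
  then show "\<exists>d. ((\<lambda>x. f x + g x) has_real_derivative d) (at x) \<and>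
      poly D x * d = poly (B + B') x + poly C x * (f x + g x)"
    by (intro exI[of _ "d + e"] conjI DERIV_add) (simp_all add: distrib_left)
qed

lemma linear_ode_on_diff:
  assumes "linear_ode_on I D B C f" and "linear_ode_on I D B C g"
  shows "linear_ode_on I D 0 C (\<lambda>x. f x - g x)"
  unfolding linear_ode_on_def
proof
  fix x assume "x \<in> I"
  then obtain d e where "(f has_real_derivative d) (at x)" "poly D x * d = poly B x + poly C x * f x"
    and "(g has_real_derivative e) (at x)" "poly D x * e = poly B x + poly C x * g x"
    using assms unfolding linear_ode_on_def by blast
  then show "\<exists>d. ((\<lambda>x. f x - g x) has_real_derivative d) (at x) \<and>
      poly D x * d = poly 0 x + poly C x * (f x - g x)"
    by (intro exI[of _ "d - e"] conjI DERIV_diff) (simp_all add: right_diff_distrib)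
qed

lemma linear_ode_on_cmult:
  assumes "linear_ode_on I D 0 C h"
  shows "linear_ode_on I D 0 C (\<lambda>x. \<sigma> * h x)"
  unfolding linear_ode_on_def
proof
  fix x assume "x \<in> I"
  then obtain d where "(h has_real_derivative d) (at x)" "poly D x * d = poly C x * h x"
    using assms unfolding linear_ode_on_def by auto
  then show "\<exists>d. ((\<lambda>x. \<sigma> * h x) has_real_derivative d) (at x) \<and>
      poly D x * d = poly 0 x + poly C x * (\<sigma> * h x)"
    by (intro exI[of _ "\<sigma> * d"] conjI DERIV_cmult) (simp_all add: mult.left_commute)
qed

lemma linear_ode_on_cong:
  assumes "open I" and "\<forall>x\<in>I. f x = g x" and "linear_ode_on I D B C g"
  shows "linear_ode_on I D B C f"
  unfolding linear_ode_on_def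
proof
  fix x assume x: "x \<in> I"
  then obtain d where "(g has_real_derivative d) (at x)" "poly D x * d = poly B x + poly C x * g x"
    using assms(3) unfolding linear_ode_on_def by blast
  moreover from this(1) have "(f has_real_derivative d) (at x)"
    by (rule has_field_derivative_transform_within_open[where S = I]) (use assms x in auto)
  ultimately show "\<exists>d. (f has_real_derivative d) (at x) \<and> poly D x * d = poly B x + poly C x * f x"
    using assms(2) x by auto
qed

lemma homogeneous_solution_multiple:
  assumes "convex I" and "\<forall>x\<in>I. poly D x \<noteq> 0"
    and "linear_ode_on I D 0 C h" and "linear_ode_on I D 0 C \<rho>" and "\<forall>x\<in>I. \<rho> x \<noteq> 0"
  obtains \<sigma> where "\<forall>x\<in>I. h x = \<sigma> * \<rho> x"
proof -
  have "((\<lambda>x. h x / \<rho> x) has_real_derivative 0) (at x within I)" if x: "x \<in> I" for x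
  proof -
    obtain d where d: "(h has_real_derivative d) (at x)" "poly D x * d = poly C x * h x"
      using assms(3) x unfolding linear_ode_on_def by auto
    obtain e where e: "(\<rho> has_real_derivative e) (at x)" "poly D x * e = poly C x * \<rho> x"
      using assms(4) x unfolding linear_ode_on_def by auto
    have "poly D x * (d * \<rho> x - h x * e) = (poly D x * d) * \<rho> x - h x * (poly D x * e)"
      by (simp add: algebra_simps)
    also have "\<dots> = 0"
      using d(2) e(2) by simp
    finally have "poly D x * (d * \<rho> x - h x * e) = 0" .
    then have "d * \<rho> x - h x * e = 0"
      using assms(2) x by simp
    with DERIV_divide[OF d(1) e(1)] assms(5) x
    have "((\<lambda>x. h x / \<rho> x) has_real_derivative 0) (at x)"
      by simp
    then show ?thesis
      by (rule has_field_derivative_at_within)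
  qed
  then obtain \<sigma> where "\<forall>x\<in>I. h x / \<rho> x = \<sigma>"
    using has_field_derivative_zero_constant[OF assms(1)] by blast
  then have "\<forall>x\<in>I. h x = \<sigma> * \<rho> x"
    using assms(5) by (simp add: field_simps)
  then show thesis
    by (rule that)
qed

lemma linear_ode_on_iff_affine:
  assumes "open I" and "convex I" and "\<forall>x\<in>I. poly D x \<noteq> 0"
    and "linear_ode_on I D B C r" and "linear_ode_on I D 0 C \<rho>" and "\<forall>x\<in>I. \<rho> x \<noteq> 0"
  shows "linear_ode_on I D B C f \<longleftrightarrow> (\<exists>\<sigma>. \<forall>x\<in>I. f x = r x + \<sigma> * \<rho> x)"
proof
  assume "linear_ode_on I D B C f"
  then have "linear_ode_on I D 0 C (\<lambda>x. f x - r x)"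
    by (rule linear_ode_on_diff[OF _ assms(4)])
  then obtain \<sigma> where "\<forall>x\<in>I. f x - r x = \<sigma> * \<rho> x"
    by (rule homogeneous_solution_multiple[OF assms(2,3) _ assms(5,6)])
  then show "\<exists>\<sigma>. \<forall>x\<in>I. f x = r x + \<sigma> * \<rho> x"
    by (auto simp: algebra_simps)
next
  assume "\<exists>\<sigma>. \<forall>x\<in>I. f x = r x + \<sigma> * \<rho> x"
  then obtain \<sigma> where f: "\<forall>x\<in>I. f x = r x + \<sigma> * \<rho> x" ..
  have "linear_ode_on I D (B + 0) C (\<lambda>x. r x + \<sigma> * \<rho> x)"
    by (rule linear_ode_on_add[OF assms(4) linear_ode_on_cmult[OF assms(5)]])
  then show "linear_ode_on I D B C f"
    using linear_ode_on_cong[OF assms(1) f] by simp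
qed

lemma linear_ode_solvable:
  fixes g \<beta> :: "real \<Rightarrow> real"
  assumes "continuous_on {a..b} g" and "continuous_on {a..b} \<beta>"
  obtains h f where "\<forall>x\<in>{a<..<b}. (h has_real_derivative g x * h x) (at x) \<and> h x > 0"
    and "\<forall>x\<in>{a<..<b}. (f has_real_derivative g x * f x + \<beta> x) (at x)"
proof -
  define h where "h x = exp (integral {a..x} g)" for x
  have dh: "(h has_real_derivative g x * h x) (at x within {a..b})" if "x \<in> {a..b}" for x
    unfolding h_def[abs_def] using DERIV_chain2[OF DERIV_exp integral_has_real_derivative[OF assms(1) that]]
    by (simp add: mult.commute)
  have "continuous_on {a..b} (\<lambda>t. \<beta> t / h t)"
    using DERIV_continuous_on[OF dh] by (intro continuous_on_divide assms(2)) (auto simp: h_def)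
  then have dU: "((\<lambda>x. integral {a..x} (\<lambda>t. \<beta> t / h t)) has_real_derivative \<beta> x / h x)
      (at x within {a..b})" if "x \<in> {a..b}" for x
    by (rule integral_has_real_derivative[OF _ that])
  define f where "f x = h x * integral {a..x} (\<lambda>t. \<beta> t / h t)" for x
  have "(h has_real_derivative g x * h x) (at x) \<and> h x > 0 \<and>
      (f has_real_derivative g x * f x + \<beta> x) (at x)" if x: "x \<in> {a<..<b}" for x
  proof -
    have at: "at x within {a..b} = at x"
      using x by (intro at_within_interior) simp
    have dh': "(h has_real_derivative g x * h x) (at x)"
      using dh[of x] x unfolding at by simp
    moreover have "h x > 0"
      by (simp add: h_def)
    moreover have "(f has_real_derivative g x * f x + \<beta> x) (at x)"
    proof -
      have "(f has_real_derivative g x * h x * integral {a..x} (\<lambda>t. \<beta> t / h t) + \<beta> x / h x * h x) (at x)"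
        unfolding f_def[abs_def] using DERIV_mult[OF dh' dU[of x, unfolded at]] x by simp
      then show ?thesis
        using \<open>h x > 0\<close> by (simp add: f_def algebra_simps)
    qed
    ultimately show ?thesis
      by blast
  qed
  then show thesis
    using that by blast
qed

lemma poly_linear_ode_solvable:
  assumes "\<forall>x\<in>{a..b}. poly D x \<noteq> 0"
  shows "\<exists>f. linear_ode_on {a<..<b} D B C f"
    and "\<exists>h. linear_ode_on {a<..<b} D 0 C h \<and> (\<forall>x\<in>{a<..<b}. h x > 0)"
proof -
  have "continuous_on {a..b} (\<lambda>x. poly C x / poly D x)" "continuous_on {a..b} (\<lambda>x. poly B x / poly D x)"
    using assms by (auto intro!: continuous_intros)
  then obtain h f
    where h: "\<forall>x\<in>{a<..<b}. (h has_real_derivative poly C x / poly D x * h x) (at x) \<and> h x > 0"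
      and f: "\<forall>x\<in>{a<..<b}. (f has_real_derivative poly C x / poly D x * f x + poly B x / poly D x) (at x)"
    by (rule linear_ode_solvable)
  have D: "poly D x \<noteq> 0" if "x \<in> {a<..<b}" for x
    using assms that by auto
  have "linear_ode_on {a<..<b} D B C f"
    unfolding linear_ode_on_def using f D by (force simp: field_simps)
  then show "\<exists>f. linear_ode_on {a<..<b} D B C f"
    by blast
  have "linear_ode_on {a<..<b} D 0 C h"
    unfolding linear_ode_on_def using h D by (force simp: field_simps)
  with h show "\<exists>h. linear_ode_on {a<..<b} D 0 C h \<and> (\<forall>x\<in>{a<..<b}. h x > 0)"
    by blast
qed

text \<open>If \<open>P(x, f)\<close> vanishes then so does \<open>\<Sum>\<^sub>k a\<^sub>k p\<^sup>m\<^sup>-\<^sup>k y\<^sup>k\<close> at \<open>y = p f\<close>; its leading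
  coefficient is still \<open>a\<^sub>m\<close>.\<close>
lemma algebraic_on_poly_mult:
  assumes "algebraic_on I f"
  shows "algebraic_on I (\<lambda>x. poly p x * f x)"
proof -
  obtain P where P: "P \<noteq> 0" "\<forall>x\<in>I. eval2 P x (f x) = 0"
    using assms unfolding algebraic_on_def by blast
  define m where "m = degree P"
  define Q where "Q = (\<Sum>k\<le>m. monom (coeff P k * p ^ (m - k)) k)"
  have "coeff Q m = lead_coeff P"
    by (simp add: Q_def coeff_sum m_def)
  then have "Q \<noteq> 0"
    using P(1) by auto
  moreover have "eval2 Q x (poly p x * f x) = poly p x ^ m * eval2 P x (f x)" for x
  proof -
    have "eval2 Q x (poly p x * f x) = (\<Sum>k\<le>m. poly p x ^ m * (poly (coeff P k) x * f x ^ k))"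
      unfolding Q_def eval2_sum
    proof (rule sum.cong)
      fix k assume "k \<in> {..m}"
      then have "poly p x ^ m = poly p x ^ (m - k) * poly p x ^ k"
        by (simp flip: power_add)
      then show "eval2 (monom (coeff P k * p ^ (m - k)) k) x (poly p x * f x) =
          poly p x ^ m * (poly (coeff P k) x * f x ^ k)"
        by (simp add: power_mult_distrib)
    qed simp
    also have "\<dots> = poly p x ^ m * eval2 P x (f x)"
      using eval2_eq_sum[of P m x "f x"] by (simp add: m_def sum_distrib_left)
    finally show ?thesis .
  qed
  ultimately show ?thesis
    using P(2) unfolding algebraic_on_def by (intro exI[of _ Q]) simp
qed

lemma algebraic_on_affine_preimage:
  assumes "algebraic_on I f" and "q \<noteq> 0" and "\<forall>x\<in>I. f x = poly p x + poly q x * g x"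
  shows "algebraic_on I g"
proof -
  obtain P where P: "P \<noteq> 0" "\<forall>x\<in>I. eval2 P x (f x) = 0"
    using assms(1) unfolding algebraic_on_def by blast
  have "pcompose P [:p, q:] \<noteq> 0"
    using P(1) assms(2) by (simp add: pcompose_eq_0_iff)
  moreover have "\<forall>x\<in>I. eval2 (pcompose P [:p, q:]) x (g x) = 0"
    using P(2) assms(3) by (simp add: eval2_pcompose mult.commute)
  ultimately show ?thesis
    unfolding algebraic_on_def by blast
qed

lemma ode_solution_iff_linear_ode_on:
  assumes "admissible qA pB qB a b"
  shows "ode_solution pA qA pB qB {a<..<b} f \<longleftrightarrow>
           linear_ode_on {a<..<b} (qA * pB) (qA * qB) (- (pA * qB)) f"
proof -
  have "f x * rat_eval pA qA x + d * rat_eval pB qB x = 1 \<longleftrightarrow>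
      poly (qA * pB) x * d = poly (qA * qB) x + poly (- (pA * qB)) x * f x"
    if "x \<in> {a<..<b}" for x d
    using assms that by (auto simp: admissible_def rat_eval_def field_simps)
  then show ?thesis
    unfolding ode_solution_def linear_ode_on_def by blast
qed

lemma admissible_interval_exists:
  assumes "qA \<noteq> 0" and "pB \<noteq> 0" and "qB \<noteq> 0"
  obtains a b where "admissible qA pB qB a b" and "\<forall>x\<in>{a..b}. poly (qA * pB) x \<noteq> 0"
proof -
  have "finite {x. poly (qA * pB * qB) x = 0}"
    using assms by (intro poly_roots_finite) simp
  then obtain M where "\<forall>x\<in>{x. poly (qA * pB * qB) x = 0}. x \<le> M"
    using bdd_above_finite unfolding bdd_above_def by blast
  then have nz: "poly qA x \<noteq> 0 \<and> poly pB x \<noteq> 0 \<and> poly qB x \<noteq> 0" if "x > M" for x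
    using that by force
  have "admissible qA pB qB (M + 1) (M + 2)"
    unfolding admissible_def using nz by simp
  moreover have "\<forall>x\<in>{M + 1..M + 2}. poly (qA * pB) x \<noteq> 0"
    using nz by simp
  ultimately show thesis
    by (rule that)
qed

lemma rational_particular_solution:
  assumes "a < b" and "\<forall>x\<in>{a..b}. poly D x \<noteq> 0"
    and "\<forall>f. linear_ode_on {a<..<b} D B C f \<longrightarrow> algebraic_on {a<..<b} f"
  obtains r1 r2 where "coprime r1 r2" and "r2 \<noteq> 0"
    and "D * (pderiv r1 * r2 - r1 * pderiv r2) = C * r1 * r2 + B * r2\<^sup>2"
proof -
  obtain f where f: "linear_ode_on {a<..<b} D B C f"
    using poly_linear_ode_solvable(1)[OF assms(2)] by blast
  have I: "open {a<..<b}" "infinite {a<..<b}"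
    using assms(1) by simp_all
  obtain u v where uv: "v \<noteq> 0" "D * (pderiv u * v - u * pderiv v) = C * u * v + B * v\<^sup>2"
    by (rule algebraic_solution_rational_identity[OF I f]) (use assms(3) f in blast)
  obtain r1 r2 where r: "coprime r1 r2" "r2 \<noteq> 0" "u \<noteq> 0 \<Longrightarrow> r1 \<noteq> 0"
    "D * (pderiv r1 * r2 - r1 * pderiv r2) = C * r1 * r2 + B * r2\<^sup>2"
    by (rule rational_solution_coprime[OF uv]) blast
  show thesis
    using r(1,2,4) by (rule that)
qed

lemma radical_homogeneous_solution:
  assumes "a < b" and D: "\<forall>x\<in>{a..b}. poly D x \<noteq> 0"
    and alg: "\<forall>f. linear_ode_on {a<..<b} D B C f \<longrightarrow> algebraic_on {a<..<b} f"
    and r: "coprime r1 r2" "r2 \<noteq> 0" "D * (pderiv r1 * r2 - r1 * pderiv r2) = C * r1 * r2 + B * r2\<^sup>2"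
  obtains m q1 q2 where "m > 0" and "coprime q1 q2" and "q1 \<noteq> 0" and "q2 \<noteq> 0"
    and "D * (pderiv q1 * q2 - q1 * pderiv q2) = of_nat m * C * q1 * q2"
proof -
  let ?I = "{a<..<b}"
  have I: "open ?I" "infinite ?I"
    using assms(1) by simp_all
  obtain h where h: "linear_ode_on ?I D 0 C h" "\<forall>x\<in>?I. h x > 0"
    using poly_linear_ode_solvable(2)[OF D] by blast
  have r2: "\<forall>x\<in>?I. poly r2 x \<noteq> 0"
    using rational_solution_denominator_nonzero[OF r] D by simp
  have "linear_ode_on ?I D B C (rat_eval r1 r2)"
    using D r2 by (intro linear_ode_on_rational[OF r(3)]) simp
  from linear_ode_on_add[OF this h(1)] have "algebraic_on ?I (\<lambda>x. rat_eval r1 r2 x + h x)"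
    using alg by simp
  then have "algebraic_on ?I (\<lambda>x. poly r2 x * (rat_eval r1 r2 x + h x))"
    by (rule algebraic_on_poly_mult)
  then have "algebraic_on ?I h"
    by (rule algebraic_on_affine_preimage[OF _ r(2), where p = r1])
      (use r2 in \<open>simp add: rat_eval_def distrib_left\<close>)
  then obtain m u v where muv: "m > 0" "u \<noteq> 0" "v \<noteq> 0"
    "D * (pderiv u * v - u * pderiv v) = of_nat m * C * u * v"
    using algebraic_solution_radical_identity[OF I h(1)] h(2) by (metis less_irrefl)
  then have "D * (pderiv u * v - u * pderiv v) = of_nat m * C * u * v + 0 * v\<^sup>2"
    by simp
  then obtain q1 q2 where q: "coprime q1 q2" "q2 \<noteq> 0" "u \<noteq> 0 \<Longrightarrow> q1 \<noteq> 0"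
    "D * (pderiv q1 * q2 - q1 * pderiv q2) = of_nat m * C * q1 * q2 + 0 * q2\<^sup>2"
    by (rule rational_solution_coprime[OF muv(3)]) blast
  show thesis
    using muv(1,2) q by (intro that) simp_all
qed

lemma linear_ode_general_solution:
  assumes "a < b" and "\<forall>x\<in>{a..b}. poly D x \<noteq> 0"
    and "\<forall>f. linear_ode_on {a<..<b} D B C f \<longrightarrow> algebraic_on {a<..<b} f"
  obtains m r1 r2 q1 q2 where "m > 0" and "r2 \<noteq> 0" and "q2 \<noteq> 0"
    and "\<And>I f. open I \<Longrightarrow> convex I \<Longrightarrow> \<forall>x\<in>I. poly D x \<noteq> 0 \<Longrightarrow>
           linear_ode_on I D B C f \<longleftrightarrow> (\<exists>\<sigma>. \<forall>x\<in>I. f x = rat_eval r1 r2 x + \<sigma> * root m (rat_eval q1 q2 x))"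
proof -
  obtain r1 r2 where r: "coprime r1 r2" "r2 \<noteq> 0"
    "D * (pderiv r1 * r2 - r1 * pderiv r2) = C * r1 * r2 + B * r2\<^sup>2"
    by (rule rational_particular_solution[OF assms])
  obtain m q1 q2 where q: "m > 0" "coprime q1 q2" "q1 \<noteq> 0" "q2 \<noteq> 0"
    "D * (pderiv q1 * q2 - q1 * pderiv q2) = of_nat m * C * q1 * q2"
    by (rule radical_homogeneous_solution[OF assms r])
  have "linear_ode_on I D B C f \<longleftrightarrow> (\<exists>\<sigma>. \<forall>x\<in>I. f x = rat_eval r1 r2 x + \<sigma> * root m (rat_eval q1 q2 x))"
    if I: "open I" "convex I" and D: "\<forall>x\<in>I. poly D x \<noteq> 0" for I f
  proof (rule linear_ode_on_iff_affine[OF I D])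
    have q12: "\<forall>x\<in>I. poly q1 x \<noteq> 0 \<and> poly q2 x \<noteq> 0"
      using rational_solution_numerator_nonzero[OF q(2,3,5)]
        rational_solution_denominator_nonzero[of q1 q2 D "of_nat m * C" 0] q D by simp
    show "linear_ode_on I D B C (rat_eval r1 r2)"
      using rational_solution_denominator_nonzero[OF r] D by (intro linear_ode_on_rational[OF r(3)]) simp
    show "linear_ode_on I D 0 C (\<lambda>x. root m (rat_eval q1 q2 x))"
      using q12 D by (intro linear_ode_on_root[OF q(5,1)]) simp
    show "\<forall>x\<in>I. root m (rat_eval q1 q2 x) \<noteq> 0"
      using q12 q(1) by (simp add: rat_eval_def)
  qed
  then show thesis
    by (rule that[OF q(1) r(2) q(4)])
qed

theorem lemma1:
  fixes pA qA pB qB :: "real poly"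
  assumes "qA \<noteq> 0" and "qB \<noteq> 0" and "pB \<noteq> 0"
    and "\<forall>a b f. admissible qA pB qB a b \<and> ode_solution pA qA pB qB {a<..<b} f
                  \<longrightarrow> algebraic_on {a<..<b} f"
  shows "\<exists>(N::nat) r1 r2 q1 q2. N \<ge> 1 \<and> r2 \<noteq> 0 \<and> q2 \<noteq> 0 \<and>
           (\<forall>a b. admissible qA pB qB a b \<longrightarrow>
              (\<forall>f. ode_solution pA qA pB qB {a<..<b} f \<longleftrightarrow>
                   (\<exists>\<sigma>::real. \<forall>x\<in>{a<..<b}.
                       f x = rat_eval r1 r2 x + \<sigma> * root N (rat_eval q1 q2 x))))"
proof -
  define D B C where "D = qA * pB" and "B = qA * qB" and "C = - (pA * qB)"
  have ode: "ode_solution pA qA pB qB {a<..<b} f \<longleftrightarrow> linear_ode_on {a<..<b} D B C f"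
    if "admissible qA pB qB a b" for a b f
    using ode_solution_iff_linear_ode_on[OF that] by (simp add: D_def B_def C_def)
  obtain a0 b0 where adm: "admissible qA pB qB a0 b0" and D0: "\<forall>x\<in>{a0..b0}. poly D x \<noteq> 0"
    unfolding D_def by (rule admissible_interval_exists[OF assms(1,3,2)])
  have "a0 < b0"
    using adm by (simp add: admissible_def)
  have alg: "\<forall>f. linear_ode_on {a0<..<b0} D B C f \<longrightarrow> algebraic_on {a0<..<b0} f"
    using assms(4) adm by (simp add: ode[OF adm])
  obtain m r1 r2 q1 q2 where "m > 0" "r2 \<noteq> 0" "q2 \<noteq> 0" and sol:
    "\<And>I f. open I \<Longrightarrow> convex I \<Longrightarrow> \<forall>x\<in>I. poly D x \<noteq> 0 \<Longrightarrow>
       linear_ode_on I D B C f \<longleftrightarrow> (\<exists>\<sigma>. \<forall>x\<in>I. f x = rat_eval r1 r2 x + \<sigma> * root m (rat_eval q1 q2 x))"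
    by (rule linear_ode_general_solution[OF \<open>a0 < b0\<close> D0 alg]) blast
  have "ode_solution pA qA pB qB {a<..<b} f \<longleftrightarrow>
      (\<exists>\<sigma>. \<forall>x\<in>{a<..<b}. f x = rat_eval r1 r2 x + \<sigma> * root m (rat_eval q1 q2 x))"
    if "admissible qA pB qB a b" for a b f
    unfolding ode[OF that] using that by (intro sol) (auto simp: admissible_def D_def)
  with \<open>m > 0\<close> \<open>r2 \<noteq> 0\<close> \<open>q2 \<noteq> 0\<close> show ?thesis
    by (intro exI[of _ m] exI[of _ r1] exI[of _ r2] exI[of _ q1] exI[of _ q2]) simp
qed

end
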